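(* Let $(V,\{\nu_n\})$ and $(W,\{\omega_n\})$ be $L^\infty$-MOS's and $\phi:V\to W$ a completely gauge-contractive linear map. Then the unital extension $\phi_1:V_1\to W_1$, $\phi_1(x,\lambda)=(\phi(x),\lambda)$, is completely positive. If moreover $\phi$ is completely gauge-isometric, then $\phi_1$ is a complete order embedding.
   Context: An $L^\infty$-MOS is a complex $*$-vector space $V$ ($M_n(V)$ with $(x_{ij})^*=(x_{ji}^* )$, self-adjoint part $M_n(V)_{sa}$) with proper gauges $\nu_n:M_n(V)_{sa}\to[0,\infty)$ (subadditive, positively homogeneous, $\nu_n(A)=\nu_n(-A)=0\Rightarrow A=0$) such that $\nu_k(X^*AX)\le\|X\|^2\nu_n(A)$ for scalar $X\in M_{n,k}$ and $\nu_{n+k}(A\oplus B)=\max\{\nu_n(A),\nu_k(B)\}$. A linear map $\phi$ between $L^\infty$-MOS's is completely gauge-contractive if $\phi(x^* )=\phi(x)^*$ and $\omega_n(\phi^{(n)}(A))\le\nu_n(A)$ for all $n$, $A\in M_n(V)_{sa}$; completely gauge-isometric if it is self-adjoint and $\omega_n(\phi^{(n)}(A))=\nu_n(A)$ for all $n$, $A$. Unitization: $V_1=V\oplus\mathbb{C}$, $M_n(V_1)=M_n(V)\oplus M_n$, $(A,X)^*=(A^*,X^* )$, $X_t=tI_n-X$, $Y\gg0$ means positive invertible, $u_n(A,X)=\inf\{t>0:X_t\gg0,\ \nu_n(X_t^{-1/2}AX_t^{-1/2})\le1\}$, with cones $M_n(V_1)_+=\{(A,X):u_n(-A,-X)=0\}$;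 similarly for $W_1$. Completely positive: each amplification maps positive cones into positive cones; complete order embedding: injective with $\phi_1^{(n)}(Z)\ge0$ iff $Z\ge0$ for all $n$. *)

theory Defs
  imports Complex_Main "HOL-Library.Extended_Real" "HOL-Library.Product_Plus"
begin

text \<open>An n x k matrix with entries in a type 'a (with a zero) is represented by a
function nat => nat => 'a that vanishes outside the index rectangle {0..<n} x {0..<k}.\<close>

definition rect :: "nat \<Rightarrow> nat \<Rightarrow> (nat \<Rightarrow> nat \<Rightarrow> 'a::zero) set" where
  "rect n k = {A. \<forall>i j. \<not> (i < n \<and> j < k) \<longrightarrow> A i j = 0}"

abbreviation sq :: "nat \<Rightarrow> (nat \<Rightarrow> nat \<Rightarrow> 'a::zero) set" where
  "sq n \<equiv> rect n n"

definition cmult :: "nat \<Rightarrow> (nat \<Rightarrow> nat \<Rightarrow> complex) \<Rightarrow> (nat \<Rightarrow> nat \<Rightarrow> complex)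
    \<Rightarrow> (nat \<Rightarrow> nat \<Rightarrow> complex)" where
  "cmult m Y Z = (\<lambda>i j. \<Sum>l<m. Y i l * Z l j)"

definition cid :: "nat \<Rightarrow> nat \<Rightarrow> nat \<Rightarrow> complex" where
  "cid n = (\<lambda>i j. if i = j \<and> i < n then 1 else 0)"

definition cadj :: "(nat \<Rightarrow> nat \<Rightarrow> complex) \<Rightarrow> (nat \<Rightarrow> nat \<Rightarrow> complex)" where
  "cadj X = (\<lambda>i j. cnj (X j i))"

definition opnorm :: "nat \<Rightarrow> nat \<Rightarrow> (nat \<Rightarrow> nat \<Rightarrow> complex) \<Rightarrow> real" where
  "opnorm n k X = Sup {sqrt (\<Sum>p<n. (cmod (\<Sum>j<k. X p j * v j))\<^sup>2) | v.
                        (\<Sum>j<k. (cmod (v j))\<^sup>2) \<le> 1}"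

definition cpos :: "nat \<Rightarrow> (nat \<Rightarrow> nat \<Rightarrow> complex) \<Rightarrow> bool" where
  "cpos n Y \<longleftrightarrow> Y \<in> sq n \<and>
     (\<forall>v. Im (\<Sum>i<n. \<Sum>j<n. cnj (v i) * Y i j * v j) = 0 \<and>
          Re (\<Sum>i<n. \<Sum>j<n. cnj (v i) * Y i j * v j) \<ge> 0)"

definition posinv :: "nat \<Rightarrow> (nat \<Rightarrow> nat \<Rightarrow> complex) \<Rightarrow> bool" where
  "posinv n Y \<longleftrightarrow> cpos n Y \<and> (\<exists>Z\<in>sq n. cmult n Y Z = cid n \<and> cmult n Z Y = cid n)"

definition isqrt :: "nat \<Rightarrow> (nat \<Rightarrow> nat \<Rightarrow> complex) \<Rightarrow> (nat \<Rightarrow> nat \<Rightarrow> complex)" where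
  "isqrt n Y = (THE S. cpos n S \<and> cmult n (cmult n S S) Y = cid n)"

text \<open>Complex *-vector space: sc is the complex scalar multiplication, st the involution.\<close>
definition star_vs :: "(complex \<Rightarrow> 'v::ab_group_add \<Rightarrow> 'v) \<Rightarrow> ('v \<Rightarrow> 'v) \<Rightarrow> bool" where
  "star_vs sc st \<longleftrightarrow> vector_space sc \<and>
     (\<forall>x y. st (x + y) = st x + st y) \<and>
     (\<forall>c x. st (sc c x) = sc (cnj c) (st x)) \<and>
     (\<forall>x. st (st x) = x)"

definition madj :: "('v \<Rightarrow> 'v) \<Rightarrow> (nat \<Rightarrow> nat \<Rightarrow> 'v) \<Rightarrow> (nat \<Rightarrow> nat \<Rightarrow> 'v)" where
  "madj st A = (\<lambda>i j. st (A j i))"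

definition msa :: "('v::zero \<Rightarrow> 'v) \<Rightarrow> nat \<Rightarrow> (nat \<Rightarrow> nat \<Rightarrow> 'v) set" where
  "msa st n = {A \<in> sq n. madj st A = A}"

definition mtriple :: "(complex \<Rightarrow> 'v::ab_group_add \<Rightarrow> 'v) \<Rightarrow> nat \<Rightarrow> nat \<Rightarrow>
    (nat \<Rightarrow> nat \<Rightarrow> complex) \<Rightarrow> (nat \<Rightarrow> nat \<Rightarrow> 'v) \<Rightarrow> (nat \<Rightarrow> nat \<Rightarrow> complex) \<Rightarrow>
    (nat \<Rightarrow> nat \<Rightarrow> 'v)" where
  "mtriple sc n k L A R = (\<lambda>i j. if i < k \<and> j < k
       then (\<Sum>p<n. \<Sum>q<n. sc (L i p * R q j) (A p q)) else 0)"

definition dsum :: "nat \<Rightarrow> nat \<Rightarrow> (nat \<Rightarrow> nat \<Rightarrow> 'v::zero) \<Rightarrow> (nat \<Rightarrow> nat \<Rightarrow> 'v)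
    \<Rightarrow> (nat \<Rightarrow> nat \<Rightarrow> 'v)" where
  "dsum n k A B = (\<lambda>i j. if i < n \<and> j < n then A i j
       else if n \<le> i \<and> n \<le> j \<and> i < n + k \<and> j < n + k then B (i - n) (j - n) else 0)"

definition amp :: "('v \<Rightarrow> 'w) \<Rightarrow> (nat \<Rightarrow> nat \<Rightarrow> 'v) \<Rightarrow> (nat \<Rightarrow> nat \<Rightarrow> 'w)" where
  "amp \<phi> A = (\<lambda>i j. \<phi> (A i j))"

definition LinfMOS :: "(complex \<Rightarrow> 'v::ab_group_add \<Rightarrow> 'v) \<Rightarrow> ('v \<Rightarrow> 'v) \<Rightarrow>
    (nat \<Rightarrow> (nat \<Rightarrow> nat \<Rightarrow> 'v) \<Rightarrow> real) \<Rightarrow> bool" where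
  "LinfMOS sc st \<nu> \<longleftrightarrow> star_vs sc st \<and>
    (\<forall>n. \<forall>A\<in>msa st n. 0 \<le> \<nu> n A) \<and>
    (\<forall>n. \<forall>A\<in>msa st n. \<forall>B\<in>msa st n. \<nu> n (\<lambda>i j. A i j + B i j) \<le> \<nu> n A + \<nu> n B) \<and>
    (\<forall>n. \<forall>A\<in>msa st n. \<forall>t>0. \<nu> n (\<lambda>i j. sc (complex_of_real t) (A i j)) = t * \<nu> n A) \<and>
    (\<forall>n. \<forall>A\<in>msa st n. \<nu> n A = 0 \<and> \<nu> n (\<lambda>i j. - A i j) = 0 \<longrightarrow> (\<forall>i j. A i j = 0)) \<and>
    (\<forall>n k. \<forall>A\<in>msa st n. \<forall>X\<in>rect n k.
        \<nu> k (mtriple sc n k (cadj X) A X) \<le> (opnorm n k X)\<^sup>2 * \<nu> n A) \<and>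
    (\<forall>n k. \<forall>A\<in>msa st n. \<forall>B\<in>msa st k.
        \<nu> (n + k) (dsum n k A B) = max (\<nu> n A) (\<nu> k B))"

definition gauge_contractive where
  "gauge_contractive scV stV \<nu> scW stW \<omega> \<phi> \<longleftrightarrow> Vector_Spaces.linear scV scW \<phi> \<and>
     (\<forall>x. \<phi> (stV x) = stW (\<phi> x)) \<and>
     (\<forall>n. \<forall>A\<in>msa stV n. \<omega> n (amp \<phi> A) \<le> \<nu> n A)"

definition gauge_isometric where
  "gauge_isometric scV stV \<nu> scW stW \<omega> \<phi> \<longleftrightarrow> Vector_Spaces.linear scV scW \<phi> \<and>
     (\<forall>x. \<phi> (stV x) = stW (\<phi> x)) \<and>
     (\<forall>n. \<forall>A\<in>msa stV n. \<omega> n (amp \<phi> A) = \<nu> n A)"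

definition shiftm :: "nat \<Rightarrow> real \<Rightarrow> (nat \<Rightarrow> nat \<Rightarrow> complex) \<Rightarrow> (nat \<Rightarrow> nat \<Rightarrow> complex)" where
  "shiftm n t X = (\<lambda>i j. complex_of_real t * cid n i j - X i j)"

definition unorm :: "(complex \<Rightarrow> 'v::ab_group_add \<Rightarrow> 'v) \<Rightarrow>
    (nat \<Rightarrow> (nat \<Rightarrow> nat \<Rightarrow> 'v) \<Rightarrow> real) \<Rightarrow> nat \<Rightarrow>
    (nat \<Rightarrow> nat \<Rightarrow> 'v) \<Rightarrow> (nat \<Rightarrow> nat \<Rightarrow> complex) \<Rightarrow> ereal" where
  "unorm sc \<nu> n A X = Inf {ereal t | t. t > 0 \<and> posinv n (shiftm n t X) \<and>
      \<nu> n (mtriple sc n n (isqrt n (shiftm n t X)) A (isqrt n (shiftm n t X))) \<le> 1}"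

text \<open>Involution on V_1 = V x C and M_n(V_1) = M_n(V) + M_n (entries are pairs).\<close>
definition ust :: "('v \<Rightarrow> 'v) \<Rightarrow> 'v \<times> complex \<Rightarrow> 'v \<times> complex" where
  "ust st z = (st (fst z), cnj (snd z))"

definition upos :: "(complex \<Rightarrow> 'v::ab_group_add \<Rightarrow> 'v) \<Rightarrow> ('v \<Rightarrow> 'v) \<Rightarrow>
    (nat \<Rightarrow> (nat \<Rightarrow> nat \<Rightarrow> 'v) \<Rightarrow> real) \<Rightarrow> nat \<Rightarrow> (nat \<Rightarrow> nat \<Rightarrow> 'v \<times> complex) \<Rightarrow> bool" where
  "upos sc st \<nu> n Z \<longleftrightarrow> Z \<in> msa (ust st) n \<and>
     unorm sc \<nu> n (\<lambda>i j. - fst (Z i j)) (\<lambda>i j. - snd (Z i j)) = 0"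

definition unital_ext :: "('v \<Rightarrow> 'w) \<Rightarrow> 'v \<times> complex \<Rightarrow> 'w \<times> complex" where
  "unital_ext \<phi> z = (\<phi> (fst z), snd z)"

definition completely_positive where
  "completely_positive scV stV \<nu> scW stW \<omega> \<psi> \<longleftrightarrow>
     (\<forall>n Z. upos scV stV \<nu> n Z \<longrightarrow> upos scW stW \<omega> n (amp \<psi> Z))"

definition complete_order_embedding where
  "complete_order_embedding scV stV \<nu> scW stW \<omega> \<psi> \<longleftrightarrow> inj \<psi> \<and>
     (\<forall>n. \<forall>Z\<in>sq n. upos scW stW \<omega> n (amp \<psi> Z) \<longleftrightarrow> upos scV stV \<nu> n Z)"

end

theory Submission
  imports Defs "Jordan_Normal_Form.Schur_Decomposition"
begin

text \<open>Positivity of \<open>(A, X)\<close> in the unitization is decided by the gauges of the sandwiched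
  matrices \<open>(t I - X)^(-1/2) A (t I - X)^(-1/2)\<close>. Scalar sandwiching commutes with the
  amplification of a linear map, so a complete gauge contraction turns every admissible \<open>t\<close>
  for \<open>-Z\<close> into an admissible \<open>t\<close> for \<open>-\<phi>\<^sub>1(Z)\<close>, and a complete gauge isometry gives the
  converse as well. The gauge inequalities only concern self-adjoint matrices, so the scalar
  square root must be Hermitian: the positive square root of a positive matrix is a polynomial in
  it (interpolation of \<open>sqrt\<close> on the spectrum plus Cayley--Hamilton via Schur triangularisation),
  which yields both its existence and its uniqueness. Injectivity of \<open>\<phi>\<close> for an isometry
  follows from properness of the gauges, applied to \<open>d + d\<^sup>*\<close> and \<open>i (d - d\<^sup>*)\<close>.\<close>

type_synonym cmat = "nat \<Rightarrow> nat \<Rightarrow> complex"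

definition mscale :: "complex \<Rightarrow> cmat \<Rightarrow> cmat" where "mscale c A = (\<lambda>i j. c * A i j)"

definition madd :: "cmat \<Rightarrow> cmat \<Rightarrow> cmat" where "madd A B = (\<lambda>i j. A i j + B i j)"

definition mdiff :: "cmat \<Rightarrow> cmat \<Rightarrow> cmat" where "mdiff A B = (\<lambda>i j. A i j - B i j)"

definition mzero :: cmat where "mzero = (\<lambda>i j. 0)"

lemma madd_app: "madd A B i j = A i j + B i j" by (simp add: madd_def)

lemma mdiff_app: "mdiff A B i j = A i j - B i j" by (simp add: mdiff_def)

lemma mzero_app: "mzero i j = 0" by (simp add: mzero_def)

lemma mscale_app: "mscale c A i j = c * A i j" by (simp add: mscale_def)

lemmas mat_ops_apply = madd_app mdiff_app mzero_app mscale_app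

lemma cmult_app: "cmult n A B i j = (\<Sum>l<n. A i l * B l j)" by (simp add: cmult_def)

lemma cmult_assoc: "cmult n (cmult n A B) C = cmult n A (cmult n B C)"
  by (auto simp: cmult_def fun_eq_iff sum_distrib_left sum_distrib_right mult.assoc
      intro: sum.swap)

lemma cmult_add_left: "cmult n (madd A B) C = madd (cmult n A C) (cmult n B C)"
  by (auto simp: cmult_def fun_eq_iff mat_ops_apply distrib_right sum.distrib)

lemma cmult_add_right: "cmult n A (madd B C) = madd (cmult n A B) (cmult n A C)"
  by (auto simp: cmult_def fun_eq_iff mat_ops_apply distrib_left sum.distrib)

lemma cmult_mscale_left: "cmult n (mscale c A) B = mscale c (cmult n A B)"
  by (auto simp: cmult_def fun_eq_iff mat_ops_apply sum_distrib_left mult.assoc)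

lemma cmult_mscale_right: "cmult n A (mscale c B) = mscale c (cmult n A B)"
  by (auto simp: cmult_def fun_eq_iff mat_ops_apply sum_distrib_left mult.left_commute)

lemma cmult_zero_left[simp]: "cmult n mzero B = mzero"
  by (auto simp: cmult_def fun_eq_iff mat_ops_apply)

lemma cmult_zero_right[simp]: "cmult n A mzero = mzero"
  by (auto simp: cmult_def fun_eq_iff mat_ops_apply)

lemma cid_sq[simp]: "cid n \<in> sq n" by (auto simp: rect_def mat_ops_apply cid_def)

lemma cmult_sq[simp]: "A \<in> sq n \<Longrightarrow> B \<in> sq n \<Longrightarrow> cmult n A B \<in> sq n"
  by (auto simp: rect_def mat_ops_apply cmult_def)

lemma madd_sq[simp]: "A \<in> sq n \<Longrightarrow> B \<in> sq n \<Longrightarrow> madd A B \<in> sq n"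
  by (simp add: rect_def mat_ops_apply)

lemma mscale_sq[simp]: "A \<in> sq n \<Longrightarrow> mscale c A \<in> sq n"
  by (auto simp: rect_def mat_ops_apply)

lemma mzero_sq[simp]: "mzero \<in> sq n" by (auto simp: rect_def mat_ops_apply)

lemma if_one_zero_mult [simp]: "(if P then 1 else 0) * (x::complex) = (if P then x else 0)"
  by simp

lemma mult_if_one_zero [simp]: "(x::complex) * (if P then 1 else 0) = (if P then x else 0)"
  by simp

lemma cmult_cid_left: "A \<in> sq n \<Longrightarrow> cmult n (cid n) A = A"
proof -
  assume A: "A \<in> sq n"
  show ?thesis unfolding fun_eq_iff mat_ops_apply cmult_def cid_def
  proof (intro allI)
    fix i j
    show "(\<Sum>l<n. (if i = l \<and> i < n then 1 else 0) * A l j) = A i j"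
      using A by (cases "i < n") (auto simp: rect_def mat_ops_apply)
  qed
qed

lemma cmult_cid_right: "A \<in> sq n \<Longrightarrow> cmult n A (cid n) = A"
proof -
  assume A: "A \<in> sq n"
  show ?thesis unfolding fun_eq_iff mat_ops_apply cmult_def cid_def
  proof (intro allI)
    fix i j
    show "(\<Sum>l<n. A i l * (if l = j \<and> l < n then 1 else 0)) = A i j"
      using A by (cases "j < n") (auto simp: rect_def mat_ops_apply)
  qed
qed

lemma cmult_apply_vec:
  "(\<Sum>j<n. cmult n A B i j * v j) = (\<Sum>l<n. A i l * (\<Sum>j<n. B l j * v j))"
  by (simp add: cmult_app sum_distrib_left sum_distrib_right mult.assoc) (rule sum.swap)

lemma cadj_cmult: "cadj (cmult n A B) = cmult n (cadj B) (cadj A)"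
  by (auto simp: cadj_def cmult_def fun_eq_iff mat_ops_apply mult.commute)

lemma cadj_add: "cadj (madd A B) = madd (cadj A) (cadj B)"
  by (auto simp: cadj_def fun_eq_iff mat_ops_apply)

lemma cadj_mscale: "cadj (mscale c A) = mscale (cnj c) (cadj A)"
  by (auto simp: cadj_def fun_eq_iff mat_ops_apply)

lemma cadj_zero[simp]: "cadj mzero = mzero"
  by (auto simp: cadj_def fun_eq_iff mat_ops_apply)

lemma cadj_cid[simp]: "cadj (cid n) = cid n"
  by (auto simp: cadj_def cid_def fun_eq_iff mat_ops_apply)

lemma cadj_sq[simp]: "A \<in> sq n \<Longrightarrow> cadj A \<in> sq n"
  by (auto simp: cadj_def rect_def mat_ops_apply)

lemma mscale_0[simp]: "mscale 0 A = mzero" by (auto simp: fun_eq_iff mat_ops_apply)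

lemma mscale_zero[simp]: "mscale c mzero = mzero" by (auto simp: fun_eq_iff mat_ops_apply)

lemma mscale_1[simp]: "mscale 1 A = A" by (auto simp: fun_eq_iff mat_ops_apply)

lemma madd_mzero[simp]: "madd mzero A = A" "madd A mzero = A"
  by (auto simp: fun_eq_iff mat_ops_apply)

lemma mdiff_mzero[simp]: "mdiff A mzero = A" by (auto simp: fun_eq_iff mat_ops_apply)

lemma mscale_add_right: "mscale c (madd A B) = madd (mscale c A) (mscale c B)"
  by (auto simp: fun_eq_iff mat_ops_apply algebra_simps)

lemma mscale_add_left: "mscale (a + b) A = madd (mscale a A) (mscale b A)"
  by (auto simp: fun_eq_iff mat_ops_apply algebra_simps)

lemma mscale_mscale: "mscale a (mscale b A) = mscale (a * b) A"
  by (auto simp: fun_eq_iff mat_ops_apply algebra_simps)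

section \<open>Polynomials evaluated at a matrix\<close>

definition poly_mat :: "nat \<Rightarrow> complex poly \<Rightarrow> cmat \<Rightarrow> cmat" where
  "poly_mat n p A = fold_coeffs (\<lambda>a M. madd (mscale a (cid n)) (cmult n A M)) p mzero"

lemma poly_mat_0[simp]: "poly_mat n 0 A = mzero" by (simp add: poly_mat_def)

lemma poly_mat_pCons:
  "poly_mat n (pCons a p) A = madd (mscale a (cid n)) (cmult n A (poly_mat n p A))"
proof (cases "p = 0 \<and> a = 0")
  case True then show ?thesis by simp
next
  case False
  then have "a \<noteq> 0 \<or> p \<noteq> 0" by auto
  then show ?thesis by (auto simp: poly_mat_def)
qed

lemma poly_mat_sq[simp]: "A \<in> sq n \<Longrightarrow> poly_mat n p A \<in> sq n"
  by (induct p) (auto simp: poly_mat_pCons)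

lemma poly_mat_add: "poly_mat n (p + q) A = madd (poly_mat n p A) (poly_mat n q A)"
proof (induct p arbitrary: q)
  case 0 then show ?case by simp
next
  case (pCons a p)
  show ?case
  proof (cases q)
    case (pCons b q')
    have h: "poly_mat n (p + q') A = madd (poly_mat n p A) (poly_mat n q' A)" by (rule pCons.hyps)
    show ?thesis unfolding pCons
      by (simp add: poly_mat_pCons h mscale_add_left cmult_add_right)
        (simp add: fun_eq_iff mat_ops_apply algebra_simps)
  qed
qed

lemma poly_mat_smult: "poly_mat n (smult c p) A = mscale c (poly_mat n p A)"
  by (induct p) (auto simp: poly_mat_pCons mscale_add_right mscale_mscale cmult_mscale_right)

lemma poly_mat_diff: "poly_mat n (p - q) A = mdiff (poly_mat n p A) (poly_mat n q A)"
proof -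
  have "poly_mat n (p - q) A = poly_mat n (p + smult (- 1) q) A" by simp
  also have "\<dots> = mdiff (poly_mat n p A) (poly_mat n q A)"
    by (simp only: poly_mat_add poly_mat_smult) (simp add: fun_eq_iff mat_ops_apply)
  finally show ?thesis .
qed

lemma poly_mat_const: "poly_mat n [:c:] A = mscale c (cid n)"
  by (simp add: poly_mat_pCons)

lemma poly_mat_X: "A \<in> sq n \<Longrightarrow> poly_mat n [:0, 1:] A = A"
  by (simp add: poly_mat_pCons cmult_cid_right)

lemma poly_mat_linear: "A \<in> sq n \<Longrightarrow> poly_mat n [:c, 1:] A = madd (mscale c (cid n)) A"
  by (simp add: poly_mat_pCons cmult_cid_right)

lemma poly_mat_commute: "A \<in> sq n \<Longrightarrow> cmult n A (poly_mat n p A) = cmult n (poly_mat n p A) A"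
proof (induct p)
  case 0 then show ?case by simp
next
  case (pCons a p)
  then show ?case
    by (simp add: poly_mat_pCons cmult_add_left cmult_add_right cmult_mscale_left
      cmult_mscale_right cmult_cid_left cmult_cid_right) (metis cmult_assoc)
qed

lemma poly_mat_mult: "A \<in> sq n \<Longrightarrow> poly_mat n (p * q) A = cmult n (poly_mat n p A) (poly_mat n q A)"
  by (induct p) (auto simp: poly_mat_pCons poly_mat_add poly_mat_smult cmult_add_left cmult_mscale_left
      cmult_cid_left cmult_assoc)

lemma poly_mat_square: "A \<in> sq n \<Longrightarrow> poly_mat n [:0, 0, 1:] A = cmult n A A"
proof -
  assume A: "A \<in> sq n"
  have "[:0, 0, 1:] = [:0, 1:] * [:0, 1 :: complex:]" by simp
  then show ?thesis using A by (simp only: poly_mat_mult poly_mat_X)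
qed

lemma poly_mat_pcompose: "A \<in> sq n \<Longrightarrow> poly_mat n (pcompose p q) A = poly_mat n p (poly_mat n q A)"
  by (induct p) (auto simp: pcompose_pCons poly_mat_pCons poly_mat_add poly_mat_mult poly_mat_const)

lemma cadj_poly_mat: "A \<in> sq n \<Longrightarrow> cadj (poly_mat n p A) = poly_mat n (map_poly cnj p) (cadj A)"
proof (induct p)
  case 0 then show ?case by simp
next
  case (pCons a p)
  have "cadj (poly_mat n (pCons a p) A)
      = madd (mscale (cnj a) (cid n)) (cmult n (poly_mat n (map_poly cnj p) (cadj A)) (cadj A))"
    using pCons by (simp add: poly_mat_pCons cadj_add cadj_mscale cadj_cmult)
  also have "\<dots>
      = madd (mscale (cnj a) (cid n)) (cmult n (cadj A) (poly_mat n (map_poly cnj p) (cadj A)))"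
    using poly_mat_commute[of "cadj A" n "map_poly cnj p"] pCons by simp
  also have "\<dots> = poly_mat n (map_poly cnj (pCons a p)) (cadj A)"
    using pCons by (auto simp: map_poly_pCons poly_mat_pCons)
  finally show ?case .
qed

lemma poly_mat_similar:
  assumes "A = cmult n (cmult n P B) Q" "cmult n Q P = cid n" "cmult n P Q = cid n"
    "P \<in> sq n" "Q \<in> sq n" "B \<in> sq n"
  shows "poly_mat n p A = cmult n (cmult n P (poly_mat n p B)) Q"
proof (induct p)
  case 0 then show ?case by simp
next
  case (pCons a p)
  have "cmult n A (cmult n (cmult n P (poly_mat n p B)) Q)
      = cmult n (cmult n P (cmult n B (poly_mat n p B))) Q"
    using assms by (simp add: cmult_assoc) (metis cmult_assoc cmult_cid_left poly_mat_sq)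
  moreover have "mscale a (cid n) = cmult n (cmult n P (mscale a (cid n))) Q"
    using assms by (simp add: cmult_mscale_right cmult_mscale_left cmult_cid_right)
  ultimately show ?case using pCons
    by (simp add: poly_mat_pCons cmult_add_right cmult_add_left)
qed

lemma prod_linear_factors_dvd:
  fixes g :: "complex poly"
  assumes "finite F" "\<forall>x\<in>F. poly g x = 0"
  shows "(\<Prod>x\<in>F. [:- x, 1:]) dvd g"
  using assms
proof (induct F rule: finite_induct)
  case empty then show ?case by simp
next
  case (insert a F)
  then obtain r where r: "g = (\<Prod>x\<in>F. [:- x, 1:]) * r" by (auto elim: dvdE)
  have "poly (\<Prod>x\<in>F. [:- x, 1:]) a \<noteq> 0" using insert(2)
    by (auto simp: poly_prod prod_zero_iff[OF insert(1)])
  moreover have "poly g a = 0" using insert by simp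
  ultimately have "poly r a = 0" using r by simp
  then obtain r' where r': "r = [:- a, 1:] * r'" by (auto simp: poly_eq_0_iff_dvd elim: dvdE)
  have "g = (\<Prod>x\<in>insert a F. [:- x, 1:]) * r'"
    unfolding r r' prod.insert[OF insert(1,2)] by (simp only: mult_ac)
  then show ?case by auto
qed

lemma poly_interpolation:
  fixes f :: "complex \<Rightarrow> complex"
  assumes "finite F"
  shows "\<exists>p. \<forall>x\<in>F. poly p x = f x"
  using assms
proof (induct F rule: finite_induct)
  case empty then show ?case by simp
next
  case (insert a F)
  then obtain p where p: "\<forall>x\<in>F. poly p x = f x" by blast
  let ?q = "\<Prod>x\<in>F. [:- x, 1:]"
  have qa: "poly ?q a \<noteq> 0" using insert(1,2) by (auto simp: poly_prod prod_zero_iff)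
  have qx: "poly ?q x = 0" if "x \<in> F" for x using insert(1) that by (auto simp: poly_prod prod_zero_iff)
  let ?p = "p + smult ((f a - poly p a) / poly ?q a) ?q"
  have "\<forall>x\<in>insert a F. poly ?p x = f x" using p qa qx by auto
  then show ?case by blast
qed

section \<open>Eigenvalues and the Cayley--Hamilton theorem\<close>

lemma poly_mat_upper_triangular_aux:
  assumes B: "B \<in> sq n" and tri: "\<And>i j. j < i \<Longrightarrow> B i j = 0"
  shows "k \<le> n \<Longrightarrow> j < k \<Longrightarrow> poly_mat n (\<Prod>l<k. [:- B l l, 1:]) B i j = 0"
proof (induct k arbitrary: j)
  case 0 then show ?case by simp
next
  case (Suc k)
  let ?C = "poly_mat n (\<Prod>l<k. [:- B l l, 1:]) B"
  let ?D = "madd (mscale (- B k k) (cid n)) B"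
  have eq: "poly_mat n (\<Prod>l<Suc k. [:- B l l, 1:]) B = cmult n ?C ?D"
    by (simp only: prod.lessThan_Suc poly_mat_mult[OF B] poly_mat_linear[OF B])
  have "(\<Sum>l<n. ?C i l * ?D l j) = 0"
  proof (rule sum.neutral, intro ballI)
    fix l assume l: "l \<in> {..<n}"
    show "?C i l * ?D l j = 0"
    proof (cases "l < k")
      case True then show ?thesis using Suc by simp
    next
      case False
      have "?D l j = 0"
      proof (cases "j < l")
        case True then show ?thesis using tri[of j l] by (simp add: mat_ops_apply cid_def)
      next
        case False
        with \<open>\<not> l < k\<close> Suc.prems have "l = k" "j = k" by auto
        then show ?thesis using l by (simp add: mat_ops_apply cid_def)
      qed
      then show ?thesis by simp
    qed
  qed
  then show ?case unfolding eq cmult_app .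
qed

lemma upper_triangular_annihilated:
  assumes B: "B \<in> sq n" and tri: "\<And>i j. j < i \<Longrightarrow> B i j = 0"
  shows "poly_mat n (\<Prod>l<n. [:- B l l, 1:]) B = mzero"
proof -
  have sqC: "poly_mat n (\<Prod>l<n. [:- B l l, 1:]) B \<in> sq n" using B by simp
  show ?thesis
  proof (rule ext, rule ext)
    fix i j
    show "poly_mat n (\<Prod>l<n. [:- B l l, 1:]) B i j = mzero i j"
    proof (cases "j < n")
      case True
      then show ?thesis
        using poly_mat_upper_triangular_aux[OF B tri, of n j i] by (simp add: mat_ops_apply)
    next
      case False then show ?thesis using sqC by (simp add: rect_def mat_ops_apply)
    qed
  qed
qed

definition fun_of_mat :: "complex mat \<Rightarrow> cmat" where
  "fun_of_mat M = (\<lambda>i j. if i < dim_row M \<and> j < dim_col M then M $$ (i, j) else 0)"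

lemma fun_of_mat_sq: "M \<in> carrier_mat n n \<Longrightarrow> fun_of_mat M \<in> sq n"
  by (auto simp: fun_of_mat_def rect_def)

lemma fun_of_mat_mult: assumes "M \<in> carrier_mat n n" "N \<in> carrier_mat n n"
  shows "fun_of_mat (M * N) = cmult n (fun_of_mat M) (fun_of_mat N)"
proof (rule ext, rule ext)
  fix i j
  show "fun_of_mat (M * N) i j = cmult n (fun_of_mat M) (fun_of_mat N) i j"
  proof (cases "i < n \<and> j < n")
    case True
    then show ?thesis using assms
      by (auto simp: fun_of_mat_def cmult_def index_mult_mat scalar_prod_def atLeast0LessThan intro!: sum.cong)
  next
    case False
    then show ?thesis using assms by (auto simp: fun_of_mat_def cmult_def)
  qed
qed

lemma fun_of_mat_one: "fun_of_mat (1\<^sub>m n) = cid n"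
  by (auto simp: fun_of_mat_def cid_def fun_eq_iff)

lemma fun_of_mat_mat: "A \<in> sq n \<Longrightarrow> fun_of_mat (mat n n (\<lambda>(i, j). A i j)) = A"
  by (auto simp: fun_of_mat_def rect_def fun_eq_iff)

definition is_eigenvalue :: "nat \<Rightarrow> cmat \<Rightarrow> complex \<Rightarrow> bool" where
  "is_eigenvalue n A e \<longleftrightarrow> (\<exists>v. (\<exists>i<n. v i \<noteq> 0) \<and> (\<forall>i<n. (\<Sum>j<n. A i j * v j) = e * v i))"

lemma eigenvalue_mat_iff:
  assumes A: "A \<in> sq n"
  shows "eigenvalue (mat n n (\<lambda>(i, j). A i j)) e \<longleftrightarrow> is_eigenvalue n A e"
proof
  assume "eigenvalue (mat n n (\<lambda>(i, j). A i j)) e"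
  then obtain v where v: "v \<in> carrier_vec n" "v \<noteq> 0\<^sub>v n"
    "mat n n (\<lambda>(i, j). A i j) *\<^sub>v v = e \<cdot>\<^sub>v v"
    by (auto simp: eigenvalue_def eigenvector_def)
  have "\<exists>i<n. v $ i \<noteq> 0"
  proof (rule ccontr)
    assume "\<not> ?thesis"
    then have "v = 0\<^sub>v n" using v(1) by (intro eq_vecI) auto
    with v(2) show False by simp
  qed
  moreover have "\<forall>i<n. (\<Sum>j<n. A i j * v $ j) = e * v $ i"
  proof (intro allI impI)
    fix i assume i: "i < n"
    have "(mat n n (\<lambda>(i, j). A i j) *\<^sub>v v) $ i = (e \<cdot>\<^sub>v v) $ i" using v(3) by simp
    then show "(\<Sum>j<n. A i j * v $ j) = e * v $ i"
      using i v(1) by (simp add: scalar_prod_def atLeast0LessThan)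
  qed
  ultimately show "is_eigenvalue n A e" unfolding is_eigenvalue_def by blast
next
  assume "is_eigenvalue n A e"
  then obtain v where v: "\<exists>i<n. v i \<noteq> 0" "\<forall>i<n. (\<Sum>j<n. A i j * v j) = e * v i"
    unfolding is_eigenvalue_def by blast
  let ?v = "vec n v"
  have "eigenvector (mat n n (\<lambda>(i, j). A i j)) ?v e"
    unfolding eigenvector_def
  proof (intro conjI)
    show "?v \<in> carrier_vec (dim_row (mat n n (\<lambda>(i, j). A i j)))" by simp
    show "?v \<noteq> 0\<^sub>v (dim_row (mat n n (\<lambda>(i, j). A i j)))"
      using v(1) by (auto simp: vec_eq_iff)
    show "mat n n (\<lambda>(i, j). A i j) *\<^sub>v ?v = e \<cdot>\<^sub>v ?v"
      using v(2) by (auto simp: scalar_prod_def atLeast0LessThan intro!: eq_vecI)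
  qed
  then show "eigenvalue (mat n n (\<lambda>(i, j). A i j)) e" unfolding eigenvalue_def by blast
qed

lemma prod_diag_mat_linear_factors:
  assumes "B \<in> carrier_mat n n"
  shows "(\<Prod>e\<leftarrow>diag_mat B. [:- e, 1:]) = (\<Prod>l<n. [:- fun_of_mat B l l, 1:])"
proof -
  have "(\<Prod>e\<leftarrow>diag_mat B. [:- e, 1:]) = (\<Prod>l\<leftarrow>[0..<n]. [:- B $$ (l, l), 1:])"
    using assms by (simp add: diag_mat_def comp_def)
  also have "\<dots> = (\<Prod>l\<in>set [0..<n]. [:- B $$ (l, l), 1:])"
    by (rule prod.distinct_set_conv_list[symmetric]) simp
  also have "\<dots> = (\<Prod>l<n. [:- fun_of_mat B l l, 1:])"
    using assms by (auto simp: fun_of_mat_def atLeast0LessThan intro!: prod.cong)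
  finally show ?thesis .
qed

lemma schur_triangularization:
  assumes A: "A \<in> sq n"
  obtains P B Q es where "P \<in> sq n" "B \<in> sq n" "Q \<in> sq n"
    "cmult n Q P = cid n" "cmult n P Q = cid n" "A = cmult n (cmult n P B) Q"
    "\<And>i j. j < i \<Longrightarrow> B i j = 0"
    "(\<Prod>e\<leftarrow>es. [:- e, 1:]) = (\<Prod>l<n. [:- B l l, 1:])"
    "\<And>e. e \<in> set es \<longleftrightarrow> is_eigenvalue n A e"
proof -
  define M where "M = mat n n (\<lambda>(i, j). A i j)"
  have M: "M \<in> carrier_mat n n" by (simp add: M_def)
  obtain es where es: "char_poly M = (\<Prod>a\<leftarrow>es. [:- a, 1:])"
    using char_poly_factorized[OF M] by blast
  obtain B P Q where sd: "schur_decomposition M es = (B, P, Q)" by (cases "schur_decomposition M es") auto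
  from schur_decomposition[OF M es sd] have sim: "similar_mat_wit M B P Q" and ut: "upper_triangular B"
    and dg: "diag_mat B = es" by auto
  from sim M have car: "B \<in> carrier_mat n n" "P \<in> carrier_mat n n" "Q \<in> carrier_mat n n"
    and PQ: "P * Q = 1\<^sub>m n" "Q * P = 1\<^sub>m n" and MPBQ: "M = P * B * Q"
    by (auto simp: similar_mat_wit_def Let_def)
  have "A = fun_of_mat M" using A by (simp add: M_def fun_of_mat_mat)
  then have "A = cmult n (cmult n (fun_of_mat P) (fun_of_mat B)) (fun_of_mat Q)"
    using car MPBQ by (simp add: fun_of_mat_mult cmult_assoc)
  moreover have "(\<Prod>e\<leftarrow>es. [:- e, 1:]) = (\<Prod>l<n. [:- fun_of_mat B l l, 1:])"
    using prod_diag_mat_linear_factors[OF car(1)] dg by simp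
  moreover have "e \<in> set es \<longleftrightarrow> is_eigenvalue n A e" for e
  proof -
    have "e \<in> set es \<longleftrightarrow> poly (char_poly M) e = 0"
      unfolding es poly_prod_list_zero_iff by auto
    also have "\<dots> \<longleftrightarrow> eigenvalue M e" using eigenvalue_root_char_poly[OF M] by simp
    also have "\<dots> \<longleftrightarrow> is_eigenvalue n A e" unfolding M_def by (rule eigenvalue_mat_iff[OF A])
    finally show ?thesis .
  qed
  moreover have "\<And>i j. j < i \<Longrightarrow> fun_of_mat B i j = 0"
    using ut car unfolding upper_triangular_def fun_of_mat_def by auto
  moreover have "cmult n (fun_of_mat Q) (fun_of_mat P) = cid n"
    "cmult n (fun_of_mat P) (fun_of_mat Q) = cid n"
    using car PQ by (simp_all add: fun_of_mat_mult[symmetric] fun_of_mat_one)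
  moreover have "fun_of_mat P \<in> sq n" "fun_of_mat B \<in> sq n" "fun_of_mat Q \<in> sq n"
    using car by (simp_all add: fun_of_mat_sq)
  ultimately show ?thesis using that by blast
qed

lemma eigenvalue_list_annihilates:
  assumes A: "A \<in> sq n"
  obtains es where "\<And>e. e \<in> set es \<longleftrightarrow> is_eigenvalue n A e"
    and "poly_mat n (\<Prod>e\<leftarrow>es. [:- e, 1:]) A = mzero"
proof -
  obtain P B Q es where sq: "P \<in> sq n" "B \<in> sq n" "Q \<in> sq n"
    and inv: "cmult n Q P = cid n" "cmult n P Q = cid n" and sim: "A = cmult n (cmult n P B) Q"
    and tri: "\<And>i j. j < i \<Longrightarrow> B i j = 0"
    and prod: "(\<Prod>e\<leftarrow>es. [:- e, 1:]) = (\<Prod>l<n. [:- B l l, 1:])"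
    and es: "\<And>e. e \<in> set es \<longleftrightarrow> is_eigenvalue n A e"
    by (rule schur_triangularization[OF A]) blast
  have "poly_mat n (\<Prod>e\<leftarrow>es. [:- e, 1:]) A
      = cmult n (cmult n P (poly_mat n (\<Prod>e\<leftarrow>es. [:- e, 1:]) B)) Q"
    by (rule poly_mat_similar[OF sim inv sq(1,3,2)])
  also have "\<dots> = mzero" by (simp add: prod upper_triangular_annihilated[OF sq(2) tri])
  finally show ?thesis by (rule that[OF es])
qed

lemma finite_eigenvalues:
  assumes "A \<in> sq n"
  shows "finite {e. is_eigenvalue n A e}"
proof -
  obtain es where "\<And>e. e \<in> set es \<longleftrightarrow> is_eigenvalue n A e"
    by (rule eigenvalue_list_annihilates[OF assms]) blast
  then have "{e. is_eigenvalue n A e} = set es" by blast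
  then show ?thesis by simp
qed

lemma is_eigenvalue_square:
  assumes "is_eigenvalue n S \<mu>"
  shows "is_eigenvalue n (cmult n S S) (\<mu> * \<mu>)"
proof -
  obtain v where v: "\<exists>i<n. v i \<noteq> 0" "\<forall>i<n. (\<Sum>j<n. S i j * v j) = \<mu> * v i"
    using assms unfolding is_eigenvalue_def by blast
  have "(\<Sum>j<n. cmult n S S i j * v j) = \<mu> * \<mu> * v i" if i: "i < n" for i
  proof -
    have "(\<Sum>j<n. cmult n S S i j * v j) = (\<Sum>l<n. S i l * (\<Sum>j<n. S l j * v j))"
      by (rule cmult_apply_vec)
    also have "\<dots> = (\<Sum>l<n. S i l * (\<mu> * v l))" using v(2) by (auto intro!: sum.cong)
    also have "\<dots> = \<mu> * (\<Sum>l<n. S i l * v l)" by (simp add: sum_distrib_left mult_ac)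
    also have "\<dots> = \<mu> * \<mu> * v i" using v(2) i by simp
    finally show ?thesis .
  qed
  then show ?thesis using v(1) unfolding is_eigenvalue_def by blast
qed

lemma cnj_mult_self: "cnj z * z = complex_of_real ((cmod z)\<^sup>2)"
  by (subst complex_norm_square) (rule mult.commute)

lemma sum_cnj_mult_self_eq_0D:
  fixes l :: nat
  assumes "(\<Sum>i<n. cnj (f i) * f i) = 0" "l < n"
  shows "f l = 0"
proof -
  have "(\<Sum>i<n. complex_of_real ((cmod (f i))\<^sup>2)) = 0" using assms(1) by (simp add: cnj_mult_self)
  then have "complex_of_real (\<Sum>i<n. (cmod (f i))\<^sup>2) = 0" by simp
  then have "(\<Sum>i<n. (cmod (f i))\<^sup>2) = 0" by (simp only: of_real_eq_0_iff)
  then have "(cmod (f l))\<^sup>2 = 0" using assms(2) by (subst (asm) sum_nonneg_eq_0_iff) auto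
  then show ?thesis by simp
qed

lemma hermitian_square_mult_eq_0:
  assumes T: "T \<in> sq n" "cadj T = T" and z: "cmult n T (cmult n T M) = mzero"
  shows "cmult n T M = mzero"
proof -
  let ?N = "cmult n T M"
  have "cmult n (cadj ?N) ?N = cmult n (cadj M) (cmult n T (cmult n T M))"
    using T by (simp add: cadj_cmult cmult_assoc)
  also have "\<dots> = mzero" using z by simp
  finally have h: "cmult n (cadj ?N) ?N = mzero" .
  show ?thesis
  proof (rule ext, rule ext)
    fix l j
    show "?N l j = mzero l j"
    proof (cases "l < n")
      case True
      have "(\<Sum>k<n. cnj (?N k j) * ?N k j) = 0"
        using fun_cong[OF fun_cong[OF h, of j], of j] by (simp add: cmult_app cadj_def mzero_app)
      from sum_cnj_mult_self_eq_0D[OF this True] show ?thesis by (simp add: mzero_app)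
    next
      case False
      then show ?thesis using T(1) by (simp add: cmult_app rect_def mzero_app)
    qed
  qed
qed

text \<open>Repeated factors can be dropped: \<open>(H - e)\<^sup>2 M = 0\<close> forces \<open>(H - e) M = 0\<close> because
  \<open>H - e\<close> is Hermitian for real \<open>e\<close>.\<close>

lemma hermitian_annihilated_by_distinct_roots:
  assumes H: "H \<in> sq n" "cadj H = H" and re: "\<forall>e\<in>set es. cnj e = e"
  shows "poly_mat n ((\<Prod>e\<leftarrow>es. [:- e, 1:]) * q) H = mzero \<Longrightarrow>
    poly_mat n ((\<Prod>e\<in>set es. [:- e, 1:]) * q) H = mzero"
  using re
proof (induct es arbitrary: q)
  case Nil then show ?case by simp
next
  case (Cons e rest)
  have "(\<Prod>x\<leftarrow>e # rest. [:- x, 1:]) * q = (\<Prod>x\<leftarrow>rest. [:- x, 1:]) * ([:- e, 1:] * q)"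
    by (simp only: list.map prod_list.Cons mult_ac)
  then have IH: "poly_mat n ((\<Prod>e\<in>set rest. [:- e, 1:]) * ([:- e, 1:] * q)) H = mzero"
    using Cons.hyps[of "[:- e, 1:] * q"] Cons.prems by simp
  show ?case
  proof (cases "e \<in> set rest")
    case False
    then have "(\<Prod>x\<in>set (e # rest). [:- x, 1:]) = [:- e, 1:] * (\<Prod>x\<in>set rest. [:- x, 1:])"
      by simp
    then show ?thesis using IH by (simp only: mult_ac)
  next
    case True
    let ?R = "(\<Prod>x\<in>set rest - {e}. [:- x, 1:])"
    have pr: "(\<Prod>x\<in>set rest. [:- x, 1:]) = [:- e, 1:] * ?R"
      using True by (simp add: prod.remove)
    let ?T = "poly_mat n [:- e, 1:] H"
    have T: "?T \<in> sq n" "cadj ?T = ?T"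
      using H Cons.prems by (auto simp: poly_mat_linear cadj_add cadj_mscale)
    have "(\<Prod>e\<in>set rest. [:- e, 1:]) * ([:- e, 1:] * q) = [:- e, 1:] * ([:- e, 1:] * (?R * q))"
      unfolding pr by (simp only: mult_ac)
    then have "cmult n ?T (cmult n ?T (poly_mat n (?R * q) H)) = mzero"
      using IH H by (simp only: poly_mat_mult poly_mat_sq)
    then have "cmult n ?T (poly_mat n (?R * q) H) = mzero" by (rule hermitian_square_mult_eq_0[OF T])
    then have "poly_mat n ((\<Prod>x\<in>set rest. [:- x, 1:]) * q) H = mzero"
      unfolding pr using H by (simp only: poly_mat_mult poly_mat_sq mult.assoc)
    then show ?thesis using True by (simp add: insert_absorb)
  qed
qed

lemma hermitian_poly_mat_eq_0:
  assumes H: "H \<in> sq n" "cadj H = H" and re: "\<And>e. is_eigenvalue n H e \<Longrightarrow> cnj e = e"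
    and g: "\<And>e. is_eigenvalue n H e \<Longrightarrow> poly g e = 0"
  shows "poly_mat n g H = mzero"
proof -
  obtain es where es: "\<And>e. e \<in> set es \<longleftrightarrow> is_eigenvalue n H e"
    and z: "poly_mat n (\<Prod>e\<leftarrow>es. [:- e, 1:]) H = mzero"
    by (rule eigenvalue_list_annihilates[OF H(1)]) blast
  have "poly_mat n ((\<Prod>e\<in>set es. [:- e, 1:]) * 1) H = mzero"
    by (rule hermitian_annihilated_by_distinct_roots[OF H]) (use es re z in auto)
  then have m: "poly_mat n (\<Prod>e\<in>set es. [:- e, 1:]) H = mzero" by simp
  obtain r where "g = (\<Prod>e\<in>set es. [:- e, 1:]) * r"
    using prod_linear_factors_dvd[of "set es" g] es g by (auto elim: dvdE)
  then show ?thesis using m H by (simp add: poly_mat_mult)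
qed

definition qform :: "nat \<Rightarrow> cmat \<Rightarrow> (nat \<Rightarrow> complex) \<Rightarrow> complex" where
  "qform n A v = (\<Sum>i<n. \<Sum>j<n. cnj (v i) * A i j * v j)"

lemma cpos_qform: "cpos n A \<longleftrightarrow> A \<in> sq n \<and> (\<forall>v. Im (qform n A v) = 0 \<and> 0 \<le> Re (qform n A v))"
  by (simp add: cpos_def qform_def)

lemma cpos_eigenvalue_nonneg:
  assumes c: "cpos n A" and ev: "is_eigenvalue n A e"
  shows "cnj e = e \<and> 0 \<le> Re e"
proof -
  obtain v where v: "\<exists>i<n. v i \<noteq> 0" "\<forall>i<n. (\<Sum>j<n. A i j * v j) = e * v i"
    using ev unfolding is_eigenvalue_def by blast
  have "qform n A v = (\<Sum>i<n. cnj (v i) * (\<Sum>j<n. A i j * v j))"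
    by (simp add: qform_def sum_distrib_left mult.assoc)
  also have "\<dots> = (\<Sum>i<n. e * (cnj (v i) * v i))"
    using v(2) by (auto intro!: sum.cong simp: mult_ac)
  also have "\<dots> = e * complex_of_real (\<Sum>i<n. (cmod (v i))\<^sup>2)"
    by (simp add: sum_distrib_left cnj_mult_self)
  finally have q: "qform n A v = e * complex_of_real (\<Sum>i<n. (cmod (v i))\<^sup>2)" .
  obtain i where i: "i < n" "v i \<noteq> 0" using v(1) by blast
  have "0 < (cmod (v i))\<^sup>2" using i by simp
  also have "\<dots> \<le> (\<Sum>i<n. (cmod (v i))\<^sup>2)"
    using i by (intro member_le_sum) auto
  finally have s: "0 < (\<Sum>i<n. (cmod (v i))\<^sup>2)" .
  have "Im (qform n A v) = 0" "0 \<le> Re (qform n A v)" using c unfolding cpos_qform by auto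
  then have "Im e * (\<Sum>i<n. (cmod (v i))\<^sup>2) = 0" "0 \<le> Re e * (\<Sum>i<n. (cmod (v i))\<^sup>2)"
    unfolding q by auto
  then have "Im e = 0" "0 \<le> Re e" using s by (auto simp: zero_le_mult_iff)
  then show ?thesis by (simp add: complex_eq_iff)
qed

lemma qform_one_support:
  assumes "i < n" "\<And>k. k \<noteq> i \<Longrightarrow> v k = 0"
  shows "qform n A v = cnj (v i) * A i i * v i"
proof -
  have sub: "{i} \<subseteq> {..<n}" using assms by auto
  have inner: "(\<Sum>l<n. cnj (v k) * A k l * v l) = (\<Sum>l\<in>{i}. cnj (v k) * A k l * v l)" for k
    by (rule sum.mono_neutral_right) (use sub assms(2) in auto)
  have "qform n A v = (\<Sum>k<n. \<Sum>l\<in>{i}. cnj (v k) * A k l * v l)"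
    unfolding qform_def inner ..
  also have "\<dots> = (\<Sum>k\<in>{i}. \<Sum>l\<in>{i}. cnj (v k) * A k l * v l)"
    by (rule sum.mono_neutral_right) (use sub assms(2) in auto)
  finally show ?thesis by simp
qed

lemma qform_two_support:
  assumes "i < n" "j < n" "i \<noteq> j" "\<And>k. k \<noteq> i \<Longrightarrow> k \<noteq> j \<Longrightarrow> v k = 0"
  shows "qform n A v = cnj (v i) * A i i * v i + cnj (v i) * A i j * v j
    + cnj (v j) * A j i * v i + cnj (v j) * A j j * v j"
proof -
  have sub: "{i, j} \<subseteq> {..<n}" using assms by auto
  have inner: "(\<Sum>l<n. cnj (v k) * A k l * v l) = (\<Sum>l\<in>{i, j}. cnj (v k) * A k l * v l)" for k
    by (rule sum.mono_neutral_right) (use sub assms(4) in auto)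
  have "qform n A v = (\<Sum>k<n. \<Sum>l\<in>{i, j}. cnj (v k) * A k l * v l)"
    unfolding qform_def inner ..
  also have "\<dots> = (\<Sum>k\<in>{i, j}. \<Sum>l\<in>{i, j}. cnj (v k) * A k l * v l)"
    by (rule sum.mono_neutral_right) (use sub assms(4) in auto)
  finally show ?thesis using assms(3) by simp
qed

lemma cpos_hermitian:
  assumes c: "cpos n A"
  shows "cadj A = A"
proof -
  have sq: "A \<in> sq n" and q: "\<And>v. Im (qform n A v) = 0" using c unfolding cpos_qform by auto
  have diag: "Im (A i i) = 0" if "i < n" for i
    using q[of "\<lambda>k. if k = i then 1 else 0"]
      qform_one_support[OF that, of "\<lambda>k. if k = i then 1 else 0" A] by simp
  have off: "A j i = cnj (A i j)" if "i < n" "j < n" "i \<noteq> j" for i j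
  proof -
    have h1: "Im (A i i + A i j + A j i + A j j) = 0"
      using q[of "\<lambda>k. if k = i then 1 else if k = j then 1 else 0"]
        qform_two_support[OF that, of "\<lambda>k. if k = i then 1 else if k = j then 1 else 0" A] that by simp
    have h2: "Im (A i i + A i j * \<i> + (- \<i>) * A j i + A j j) = 0"
      using q[of "\<lambda>k. if k = i then 1 else if k = j then \<i> else 0"]
        qform_two_support[OF that, of "\<lambda>k. if k = i then 1 else if k = j then \<i> else 0" A] that
      by (simp add: mult_ac)
    have "Im (A i j) + Im (A j i) = 0" using h1 diag that by simp
    moreover have "Re (A i j) - Re (A j i) = 0" using h2 diag that by simp
    ultimately show ?thesis by (simp add: complex_eq_iff)
  qed
  show ?thesis
  proof (rule ext, rule ext)
    fix i j
    show "cadj A i j = A i j"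
    proof (cases "i < n \<and> j < n")
      case True
      show ?thesis
      proof (cases "i = j")
        case True then show ?thesis using diag \<open>i < n \<and> j < n\<close> by (simp add: cadj_def complex_eq_iff)
      next
        case False then show ?thesis using off[of i j] \<open>i < n \<and> j < n\<close> by (simp add: cadj_def)
      qed
    next
      case False then show ?thesis using sq by (auto simp: cadj_def rect_def)
    qed
  qed
qed

lemma qform_adj_mult:
  "qform n (cmult n (cadj T) T) v = (\<Sum>l<n. cnj (\<Sum>j<n. T l j * v j) * (\<Sum>j<n. T l j * v j))"
proof -
  have "qform n (cmult n (cadj T) T) v = (\<Sum>i<n. \<Sum>j<n. \<Sum>l<n. cnj (T l i * v i) * (T l j * v j))"
    by (simp add: qform_def cmult_app cadj_def sum_distrib_left sum_distrib_right mult_ac)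
  also have "\<dots> = (\<Sum>i<n. \<Sum>l<n. \<Sum>j<n. cnj (T l i * v i) * (T l j * v j))"
    by (rule sum.cong[OF refl], rule sum.swap)
  also have "\<dots> = (\<Sum>l<n. \<Sum>i<n. \<Sum>j<n. cnj (T l i * v i) * (T l j * v j))"
    by (rule sum.swap)
  also have "\<dots> = (\<Sum>l<n. cnj (\<Sum>j<n. T l j * v j) * (\<Sum>j<n. T l j * v j))"
    by (simp add: sum_distrib_left sum_distrib_right cnj_sum) (rule sum.cong[OF refl], rule sum.swap)
  finally show ?thesis .
qed

lemma cpos_adj_mult: assumes "T \<in> sq n" shows "cpos n (cmult n (cadj T) T)"
  unfolding cpos_qform
proof (intro conjI allI)
  show "cmult n (cadj T) T \<in> sq n" using assms by simp
  fix v
  have e: "qform n (cmult n (cadj T) T) v = complex_of_real (\<Sum>l<n. (cmod (\<Sum>j<n. T l j * v j))\<^sup>2)"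
    unfolding qform_adj_mult cnj_mult_self by simp
  show "Im (qform n (cmult n (cadj T) T) v) = 0" unfolding e by (simp only: Im_complex_of_real)
  show "0 \<le> Re (qform n (cmult n (cadj T) T) v)" unfolding e Re_complex_of_real by (simp add: sum_nonneg)
qed

lemma cpos_inverse:
  assumes Y: "cpos n Y" and Z: "Z \<in> sq n" "cmult n Y Z = cid n" "cmult n Z Y = cid n"
  shows "cpos n Z"
proof -
  have hY: "cadj Y = Y" by (rule cpos_hermitian[OF Y])
  have hZ: "cadj Z = Z"
  proof -
    have c: "cmult n (cadj Z) (cadj Y) = cid n" using Z(2) by (metis cadj_cmult cadj_cid)
    have "cadj Z = cmult n (cadj Z) (cmult n Y Z)" using Z by (simp add: cmult_cid_right)
    also have "\<dots> = cmult n (cmult n (cadj Z) (cadj Y)) Z" using hY by (simp add: cmult_assoc)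
    also have "\<dots> = Z" using Z by (simp add: c cmult_cid_left)
    finally show ?thesis .
  qed
  then have cnjZ: "cnj (Z i j) = Z j i" for i j by (metis cadj_def)
  have "qform n Z v = qform n Y (\<lambda>i. \<Sum>j<n. Z i j * v j)" for v
  proof -
    define w where "w = (\<lambda>i. \<Sum>j<n. Z i j * v j)"
    have Yw: "(\<Sum>j<n. Y i j * w j) = v i" if "i < n" for i
    proof -
      have "(\<Sum>j<n. Y i j * w j) = (\<Sum>j<n. cmult n Y Z i j * v j)"
        by (simp add: w_def cmult_apply_vec)
      also have "\<dots> = v i" using that by (simp add: Z(2) cid_def)
      finally show ?thesis .
    qed
    have "qform n Y w = (\<Sum>i<n. cnj (w i) * (\<Sum>j<n. Y i j * w j))"
      by (simp add: qform_def sum_distrib_left mult.assoc)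
    also have "\<dots> = (\<Sum>i<n. cnj (w i) * v i)" using Yw by simp
    also have "\<dots> = (\<Sum>i<n. \<Sum>j<n. cnj (v j) * Z j i * v i)"
      by (simp add: w_def cnj_sum sum_distrib_left sum_distrib_right cnjZ mult_ac)
    also have "\<dots> = qform n Z v" unfolding qform_def by (rule sum.swap)
    finally show ?thesis unfolding w_def by simp
  qed
  then show ?thesis using Y Z(1) unfolding cpos_qform by simp
qed

section \<open>Positive square roots\<close>

lemma cnj_eq_imp_real: "cnj e = e \<Longrightarrow> e = complex_of_real (Re e)"
  by (simp add: complex_eq_iff)

text \<open>Square roots are polynomials in the matrix: the polynomial takes the value \<open>sqrt e\<close> at
  every eigenvalue \<open>e\<close>, and has the form \<open>cnj h * h\<close> so that its value at a Hermitian matrix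
  is positive.\<close>

lemma sqrt_poly_exists:
  assumes "finite F"
  shows "\<exists>h. \<forall>e\<in>F. cnj e = e \<longrightarrow> 0 \<le> Re e \<longrightarrow>
    poly (map_poly cnj h * h) e = complex_of_real (sqrt (Re e))"
proof -
  obtain h where h: "\<forall>x\<in>F. poly h x = complex_of_real (sqrt (sqrt (Re x)))"
    using poly_interpolation[OF assms, of "\<lambda>x. complex_of_real (sqrt (sqrt (Re x)))"] by blast
  have "poly (map_poly cnj h * h) e = complex_of_real (sqrt (Re e))"
    if e: "e \<in> F" "cnj e = e" "0 \<le> Re e" for e
  proof -
    have "poly (map_poly cnj h * h) e = cnj (poly h (cnj e)) * poly h e" by simp
    also have "\<dots> = complex_of_real (sqrt (sqrt (Re e)) * sqrt (sqrt (Re e)))"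
      using h e by (simp del: of_real_mult add: of_real_mult[symmetric])
    also have "sqrt (sqrt (Re e)) * sqrt (sqrt (Re e)) = sqrt (Re e)"
      using e by simp
    finally show ?thesis .
  qed
  then show ?thesis by blast
qed

lemma cpos_poly_mat_adj_mult:
  assumes "H \<in> sq n" "cadj H = H"
  shows "cpos n (poly_mat n (map_poly cnj h * h) H)"
proof -
  have "poly_mat n (map_poly cnj h * h) H = cmult n (cadj (poly_mat n h H)) (poly_mat n h H)"
    using assms by (simp add: poly_mat_mult cadj_poly_mat)
  then show ?thesis using assms by (simp add: cpos_adj_mult)
qed

lemma poly_mat_sqrt_square:
  assumes H: "cpos n H"
    and k: "\<And>e. is_eigenvalue n H e \<Longrightarrow> poly k e = complex_of_real (sqrt (Re e))"
  shows "cmult n (poly_mat n k H) (poly_mat n k H) = H"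
proof -
  have sq: "H \<in> sq n" using H by (simp add: cpos_def)
  have "poly_mat n (k * k - [:0, 1:]) H = mzero"
  proof (rule hermitian_poly_mat_eq_0[OF sq cpos_hermitian[OF H]])
    show "cnj e = e" if "is_eigenvalue n H e" for e
      using cpos_eigenvalue_nonneg[OF H that] by simp
    show "poly (k * k - [:0, 1:]) e = 0" if e: "is_eigenvalue n H e" for e
    proof -
      have r: "cnj e = e" "0 \<le> Re e" using cpos_eigenvalue_nonneg[OF H e] by auto
      have "poly (k * k - [:0, 1:]) e = complex_of_real (sqrt (Re e) * sqrt (Re e)) - e"
        using k[OF e] by (simp del: of_real_mult add: of_real_mult[symmetric])
      also have "\<dots> = complex_of_real (Re e) - e" using r by simp
      also have "\<dots> = 0" using cnj_eq_imp_real[OF r(1)] by simp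
      finally show ?thesis .
    qed
  qed
  then have "mdiff (cmult n (poly_mat n k H) (poly_mat n k H)) H = mzero"
    using sq by (simp add: poly_mat_diff poly_mat_mult poly_mat_X)
  then show ?thesis by (auto simp: fun_eq_iff mat_ops_apply)
qed

lemma cpos_sqrt_unique:
  assumes S: "cpos n S"
    and k: "\<And>e. is_eigenvalue n (cmult n S S) e \<Longrightarrow> poly k e = complex_of_real (sqrt (Re e))"
  shows "poly_mat n k (cmult n S S) = S"
proof -
  have sq: "S \<in> sq n" using S by (simp add: cpos_def)
  have "poly_mat n (pcompose k [:0, 0, 1:] - [:0, 1:]) S = mzero"
  proof (rule hermitian_poly_mat_eq_0[OF sq cpos_hermitian[OF S]])
    show "cnj \<mu> = \<mu>" if "is_eigenvalue n S \<mu>" for \<mu>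
      using cpos_eigenvalue_nonneg[OF S that] by simp
    show "poly (pcompose k [:0, 0, 1:] - [:0, 1:]) \<mu> = 0" if \<mu>: "is_eigenvalue n S \<mu>" for \<mu>
    proof -
      have mr: "cnj \<mu> = \<mu>" "0 \<le> Re \<mu>" using cpos_eigenvalue_nonneg[OF S \<mu>] by auto
      have "Re (\<mu> * \<mu>) = Re \<mu> * Re \<mu>" using mr cnj_eq_imp_real[of \<mu>]
        by (metis Re_complex_of_real of_real_mult)
      then have "poly k (\<mu> * \<mu>) = complex_of_real (Re \<mu>)"
        using k[OF is_eigenvalue_square[OF \<mu>]] mr by (simp add: real_sqrt_mult)
      then show ?thesis using cnj_eq_imp_real[of \<mu>] mr by (simp add: poly_pcompose)
    qed
  qed
  then have "poly_mat n (pcompose k [:0, 0, 1:]) S = poly_mat n [:0, 1:] S"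
    by (auto simp: poly_mat_diff fun_eq_iff mat_ops_apply)
  then show ?thesis using sq by (simp add: poly_mat_pcompose poly_mat_square poly_mat_X)
qed

lemma cpos_unique_sqrt:
  assumes H: "cpos n H"
  shows "\<exists>S. cpos n S \<and> cmult n S S = H \<and> (\<forall>S'. cpos n S' \<and> cmult n S' S' = H \<longrightarrow> S' = S)"
proof -
  have sq: "H \<in> sq n" using H by (simp add: cpos_def)
  obtain h where h: "\<forall>e\<in>{e. is_eigenvalue n H e}. cnj e = e \<longrightarrow> 0 \<le> Re e \<longrightarrow>
      poly (map_poly cnj h * h) e = complex_of_real (sqrt (Re e))"
    using sqrt_poly_exists[OF finite_eigenvalues[OF sq]] by blast
  define k where "k = map_poly cnj h * h"
  have k: "\<And>e. is_eigenvalue n H e \<Longrightarrow> poly k e = complex_of_real (sqrt (Re e))"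
    using h cpos_eigenvalue_nonneg[OF H] by (simp add: k_def)
  show ?thesis
  proof (intro exI conjI allI impI)
    show "cpos n (poly_mat n k H)"
      unfolding k_def by (rule cpos_poly_mat_adj_mult[OF sq cpos_hermitian[OF H]])
    show "cmult n (poly_mat n k H) (poly_mat n k H) = H" by (rule poly_mat_sqrt_square[OF H k])
    fix S' assume "cpos n S' \<and> cmult n S' S' = H"
    then have S': "cpos n S'" and HS: "cmult n S' S' = H" by auto
    have "poly_mat n k (cmult n S' S') = S'" by (rule cpos_sqrt_unique[OF S']) (use k HS in simp)
    then show "S' = poly_mat n k H" using HS by simp
  qed
qed

text \<open>\<open>isqrt\<close> is defined by \<open>THE\<close>, so existence and uniqueness of the positive square root of
  \<open>Y^(-1)\<close> are both needed.\<close>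

lemma isqrt_posinv:
  assumes "posinv n Y"
  shows "cpos n (isqrt n Y)"
proof -
  obtain Z where Z: "Z \<in> sq n" "cmult n Y Z = cid n" "cmult n Z Y = cid n" and Y: "cpos n Y"
    using assms unfolding posinv_def by blast
  obtain S where S: "cpos n S" "cmult n S S = Z"
    and uniq: "\<forall>S'. cpos n S' \<and> cmult n S' S' = Z \<longrightarrow> S' = S"
    using cpos_unique_sqrt[OF cpos_inverse[OF Y Z]] by blast
  have "isqrt n Y = S" unfolding isqrt_def
  proof (rule the_equality)
    show "cpos n S \<and> cmult n (cmult n S S) Y = cid n" using S Z by simp
    fix S' assume a: "cpos n S' \<and> cmult n (cmult n S' S') Y = cid n"
    have sqS': "S' \<in> sq n" using a by (simp add: cpos_def)
    have "cmult n S' S' = cmult n (cmult n S' S') (cmult n Y Z)" using Z sqS' by (simp add: cmult_cid_right)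
    also have "\<dots> = cmult n (cmult n (cmult n S' S') Y) Z" by (simp add: cmult_assoc)
    also have "\<dots> = Z" using a Z by (simp add: cmult_cid_left)
    finally show "S' = S" using uniq a by blast
  qed
  then show ?thesis using S by simp
qed

lemma star_vs_ops:
  assumes "star_vs sc st"
  shows "st 0 = 0" "st (- x) = - st x" "st (\<Sum>i<(n::nat). f i) = (\<Sum>i<n. st (f i))"
    "st (sc c y) = sc (cnj c) (st y)" "st (st y) = y" "st (a + b) = st a + st b"
proof -
  have add: "\<And>x y. st (x + y) = st x + st y" using assms by (simp add: star_vs_def)
  show z: "st 0 = 0" using add[of 0 0] by simp
  show "st (- x) = - st x" using add[of x "- x"] z by (simp add: eq_neg_iff_add_eq_0 add.commute)
  show "st (\<Sum>i<n. f i) = (\<Sum>i<n. st (f i))" by (induct n) (simp_all add: z add)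
  show "st (sc c y) = sc (cnj c) (st y)" "st (st y) = y" using assms by (simp_all add: star_vs_def)
  show "st (a + b) = st a + st b" by (rule add)
qed

lemma mtriple_hermitian_msa:
  assumes st: "star_vs sc st" and A: "A \<in> msa st n" and S: "cadj S = S"
  shows "mtriple sc n n S A S \<in> msa st n"
proof -
  have As: "A \<in> sq n" "\<And>i j. st (A j i) = A i j" using A by (auto simp: msa_def madj_def fun_eq_iff)
  have Sh: "\<And>i j. cnj (S j i) = S i j" using S by (auto simp: cadj_def fun_eq_iff)
  have "madj st (mtriple sc n n S A S) = mtriple sc n n S A S"
  proof (rule ext, rule ext)
    fix i j
    show "madj st (mtriple sc n n S A S) i j = mtriple sc n n S A S i j"
    proof (cases "i < n \<and> j < n")
      case False then show ?thesis by (auto simp: madj_def mtriple_def star_vs_ops(1)[OF st])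
    next
      case True
      have "madj st (mtriple sc n n S A S) i j = (\<Sum>p<n. \<Sum>q<n. sc (S p j * S i q) (A q p))"
        using True by (simp add: madj_def mtriple_def star_vs_ops[OF st] Sh As(2))
      also have "\<dots> = (\<Sum>q<n. \<Sum>p<n. sc (S p j * S i q) (A q p))" by (rule sum.swap)
      also have "\<dots> = mtriple sc n n S A S i j"
        using True by (simp add: mtriple_def mult.commute)
      finally show ?thesis .
    qed
  qed
  moreover have "mtriple sc n n S A S \<in> sq n" by (auto simp: rect_def mtriple_def)
  ultimately show ?thesis by (simp add: msa_def)
qed

lemma amp_mtriple:
  assumes "Vector_Spaces.linear scV scW \<phi>"
  shows "amp \<phi> (mtriple scV n k L A R) = mtriple scW n k L (amp \<phi> A) R"
proof -
  interpret lin: Vector_Spaces.linear scV scW \<phi> by fact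
  show ?thesis by (auto simp: amp_def mtriple_def fun_eq_iff lin.sum lin.scale)
qed

lemma neg_fst_msa:
  assumes st: "star_vs sc st" and Z: "Z \<in> msa (ust st) n"
  shows "(\<lambda>i j. - fst (Z i j)) \<in> msa st n"
  using Z by (auto simp: msa_def madj_def rect_def fun_eq_iff ust_def star_vs_ops[OF st] prod_eq_iff)

lemma LinfMOS_gauge_zero:
  assumes L: "LinfMOS sc st \<nu>"
  shows "\<nu> n (\<lambda>i j. 0) = 0"
proof -
  have st: "star_vs sc st" using L by (simp add: LinfMOS_def)
  interpret vs: Vector_Spaces.vector_space sc using st by (simp add: star_vs_def)
  have m: "(\<lambda>i j. 0) \<in> msa st n" by (auto simp: msa_def madj_def rect_def star_vs_ops(1)[OF st])
  have hom: "\<forall>n. \<forall>A\<in>msa st n. \<forall>t>0. \<nu> n (\<lambda>i j. sc (complex_of_real t) (A i j)) = t * \<nu> n A"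
    using L by (simp add: LinfMOS_def)
  have "\<nu> n (\<lambda>i j. sc (complex_of_real 2) ((\<lambda>i j. 0) i j)) = 2 * \<nu> n (\<lambda>i j. 0)"
    by (rule hom[rule_format, OF m]) simp
  then show ?thesis by simp
qed

lemma selfadj_kernel_zero:
  assumes LV: "LinfMOS scV stV \<nu>" and LW: "LinfMOS scW stW \<omega>"
    and lin: "Vector_Spaces.linear scV scW \<phi>"
    and iso: "\<And>A. A \<in> msa stV 1 \<Longrightarrow> \<omega> 1 (amp \<phi> A) = \<nu> 1 A"
    and x: "stV x = x" "\<phi> x = 0"
  shows "x = 0"
proof -
  interpret lin: Vector_Spaces.linear scV scW \<phi> by fact
  have stV: "star_vs scV stV" using LV by (simp add: LinfMOS_def)
  define M where "M = (\<lambda>(i::nat) (j::nat). if i = 0 \<and> j = 0 then x else 0)"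
  have M: "M \<in> msa stV 1"
    using x by (auto simp: M_def msa_def madj_def rect_def star_vs_ops(1)[OF stV] fun_eq_iff)
  have M': "(\<lambda>i j. - M i j) \<in> msa stV 1"
    using x by (auto simp: M_def msa_def madj_def rect_def star_vs_ops(1,2)[OF stV] fun_eq_iff)
  have a1: "amp \<phi> M = (\<lambda>i j. 0)" using x by (auto simp: amp_def M_def fun_eq_iff)
  have a2: "amp \<phi> (\<lambda>i j. - M i j) = (\<lambda>i j. 0)" using x by (auto simp: amp_def M_def fun_eq_iff lin.neg)
  have "\<nu> 1 M = 0" using iso[OF M] a1 LinfMOS_gauge_zero[OF LW] by simp
  moreover have "\<nu> 1 (\<lambda>i j. - M i j) = 0" using iso[OF M'] a2 LinfMOS_gauge_zero[OF LW] by simp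
  ultimately have "\<forall>i j. M i j = 0" using LV M unfolding LinfMOS_def by blast
  then have "M 0 0 = 0" by blast
  moreover have "M 0 0 = x" by (simp add: M_def)
  ultimately show ?thesis by simp
qed

lemma star_vs_real_part_selfadj:
  assumes "star_vs sc st"
  shows "st (d + st d) = d + st d"
  by (simp only: star_vs_ops(5,6)[OF assms] add.commute)

lemma star_vs_imag_part_selfadj:
  assumes st: "star_vs sc st"
  shows "st (sc \<i> (d - st d)) = sc \<i> (d - st d)"
proof -
  interpret vs: Vector_Spaces.vector_space sc using st by (simp add: star_vs_def)
  have "st (d - st d) = st (d + - st d)" by (simp only: diff_conv_add_uminus)
  also have "\<dots> = st d + - st (st d)" by (simp only: star_vs_ops(2,6)[OF st])
  also have "\<dots> = st d - d" by (simp only: star_vs_ops(5)[OF st] diff_conv_add_uminus)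
  finally have sd: "st (d - st d) = st d - d" .
  show ?thesis
    unfolding star_vs_ops(4)[OF st] sd
    by (metis complex_cnj_i minus_diff_eq vs.scale_minus_left vs.scale_minus_right)
qed

lemma star_vs_eq_0_if_parts_eq_0:
  assumes st: "star_vs sc st" and re: "d + st d = 0" and im: "sc \<i> (d - st d) = 0"
  shows "d = 0"
proof -
  interpret vs: Vector_Spaces.vector_space sc using st by (simp add: star_vs_def)
  have im': "d - st d = 0" using im vs.scale_eq_0_iff by simp
  have "sc (1 + 1) d = sc 1 d + sc 1 d" by (rule vs.scale_left_distrib)
  then have "sc 2 d = (d + st d) + (d - st d)" by (simp add: algebra_simps)
  then have "sc 2 d = 0" by (simp only: re im' add_0_left)
  then show ?thesis by simp
qed

lemma isometric_kernel_zero: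
  assumes LV: "LinfMOS scV stV \<nu>" and LW: "LinfMOS scW stW \<omega>"
    and lin: "Vector_Spaces.linear scV scW \<phi>"
    and com: "\<And>x. \<phi> (stV x) = stW (\<phi> x)"
    and iso: "\<And>A. A \<in> msa stV 1 \<Longrightarrow> \<omega> 1 (amp \<phi> A) = \<nu> 1 A"
    and d: "\<phi> d = 0"
  shows "d = 0"
proof -
  interpret lin: Vector_Spaces.linear scV scW \<phi> by fact
  have stV: "star_vs scV stV" and stW: "star_vs scW stW"
    using LV LW by (simp_all add: LinfMOS_def)
  have re: "d + stV d = 0"
  proof (rule selfadj_kernel_zero[OF LV LW lin iso])
    show "stV (d + stV d) = d + stV d" by (rule star_vs_real_part_selfadj[OF stV])
    show "\<phi> (d + stV d) = 0" by (simp only: lin.add com d star_vs_ops(1)[OF stW] add_0_left)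
  qed
  have im: "scV \<i> (d - stV d) = 0"
  proof (rule selfadj_kernel_zero[OF LV LW lin iso])
    show "stV (scV \<i> (d - stV d)) = scV \<i> (d - stV d)"
      by (rule star_vs_imag_part_selfadj[OF stV])
    show "\<phi> (scV \<i> (d - stV d)) = 0"
      by (simp only: lin.scale lin.diff com d star_vs_ops(1)[OF stW] diff_self
          lin.vs2.scale_zero_right)
  qed
  show ?thesis by (rule star_vs_eq_0_if_parts_eq_0[OF stV re im])
qed

lemma gauge_isometric_inj:
  assumes LV: "LinfMOS scV stV \<nu>" and LW: "LinfMOS scW stW \<omega>"
    and iso: "gauge_isometric scV stV \<nu> scW stW \<omega> \<phi>"
  shows "inj \<phi>"
proof (rule injI)
  have lin: "Vector_Spaces.linear scV scW \<phi>" and com: "\<And>x. \<phi> (stV x) = stW (\<phi> x)"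
    and isoe: "\<And>A. A \<in> msa stV 1 \<Longrightarrow> \<omega> 1 (amp \<phi> A) = \<nu> 1 A"
    using iso by (auto simp: gauge_isometric_def)
  interpret lin: Vector_Spaces.linear scV scW \<phi> by (rule lin)
  fix x y assume "\<phi> x = \<phi> y"
  then have "\<phi> (x - y) = 0" by (simp add: lin.diff)
  then show "x = y" using isometric_kernel_zero[OF LV LW lin com isoe, of "x - y"] by simp
qed

section \<open>The unital extension\<close>

definition ugauge_set :: "(complex \<Rightarrow> 'v::ab_group_add \<Rightarrow> 'v) \<Rightarrow>
    (nat \<Rightarrow> (nat \<Rightarrow> nat \<Rightarrow> 'v) \<Rightarrow> real) \<Rightarrow> nat \<Rightarrow> (nat \<Rightarrow> nat \<Rightarrow> 'v) \<Rightarrow> cmat \<Rightarrow>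
    ereal set" where
  "ugauge_set sc \<nu> n A X = {ereal t | t. t > 0 \<and> posinv n (shiftm n t X) \<and>
      \<nu> n (mtriple sc n n (isqrt n (shiftm n t X)) A (isqrt n (shiftm n t X))) \<le> 1}"

lemma unorm_ugauge_set: "unorm sc \<nu> n A X = Inf (ugauge_set sc \<nu> n A X)"
  by (simp add: unorm_def ugauge_set_def)

lemma Inf_eq_if_subset_lower_bound:
  fixes c :: "'a::complete_lattice"
  assumes "Inf S1 = c" "S1 \<subseteq> S2" "\<forall>x\<in>S2. c \<le> x"
  shows "Inf S2 = c"
proof (rule antisym)
  show "Inf S2 \<le> c" using assms(1,2) Inf_superset_mono by metis
  show "c \<le> Inf S2" using assms(3) by (auto intro: Inf_greatest)
qed

lemma ugauge_set_nonneg: "\<forall>x\<in>ugauge_set sc \<nu> n A X. 0 \<le> x"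
  by (auto simp: ugauge_set_def)

lemma ugauge_set_amp_subset:
  assumes st: "star_vs scV stV" and lin: "Vector_Spaces.linear scV scW \<phi>"
    and A: "A \<in> msa stV n"
    and c: "\<And>M. M \<in> msa stV n \<Longrightarrow> \<nu> n M \<le> 1 \<Longrightarrow> \<omega> n (amp \<phi> M) \<le> 1"
  shows "ugauge_set scV \<nu> n A X \<subseteq> ugauge_set scW \<omega> n (amp \<phi> A) X"
proof
  fix x assume "x \<in> ugauge_set scV \<nu> n A X"
  then obtain t where t: "x = ereal t" "t > 0" "posinv n (shiftm n t X)"
    "\<nu> n (mtriple scV n n (isqrt n (shiftm n t X)) A (isqrt n (shiftm n t X))) \<le> 1"
    by (auto simp: ugauge_set_def)
  let ?S = "isqrt n (shiftm n t X)"
  have "cadj ?S = ?S" by (rule cpos_hermitian[OF isqrt_posinv[OF t(3)]])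
  then have "mtriple scV n n ?S A ?S \<in> msa stV n" by (rule mtriple_hermitian_msa[OF st A])
  then have "\<omega> n (amp \<phi> (mtriple scV n n ?S A ?S)) \<le> 1" using c t(4) by blast
  then have "\<omega> n (mtriple scW n n ?S (amp \<phi> A) ?S) \<le> 1" by (simp add: amp_mtriple[OF lin])
  then show "x \<in> ugauge_set scW \<omega> n (amp \<phi> A) X" using t by (auto simp: ugauge_set_def)
qed

lemma ugauge_set_amp_supset:
  assumes st: "star_vs scV stV" and lin: "Vector_Spaces.linear scV scW \<phi>"
    and A: "A \<in> msa stV n"
    and c: "\<And>M. M \<in> msa stV n \<Longrightarrow> \<omega> n (amp \<phi> M) \<le> 1 \<Longrightarrow> \<nu> n M \<le> 1"
  shows "ugauge_set scW \<omega> n (amp \<phi> A) X \<subseteq> ugauge_set scV \<nu> n A X"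
proof
  fix x assume "x \<in> ugauge_set scW \<omega> n (amp \<phi> A) X"
  then obtain t where t: "x = ereal t" "t > 0" "posinv n (shiftm n t X)"
    "\<omega> n (mtriple scW n n (isqrt n (shiftm n t X)) (amp \<phi> A) (isqrt n (shiftm n t X))) \<le> 1"
    by (auto simp: ugauge_set_def)
  let ?S = "isqrt n (shiftm n t X)"
  have "cadj ?S = ?S" by (rule cpos_hermitian[OF isqrt_posinv[OF t(3)]])
  then have M: "mtriple scV n n ?S A ?S \<in> msa stV n" by (rule mtriple_hermitian_msa[OF st A])
  have "\<omega> n (amp \<phi> (mtriple scV n n ?S A ?S)) \<le> 1" using t(4) by (simp add: amp_mtriple[OF lin])
  then have "\<nu> n (mtriple scV n n ?S A ?S) \<le> 1" using c M by blast
  then show "x \<in> ugauge_set scV \<nu> n A X" using t by (auto simp: ugauge_set_def)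
qed

lemma amp_unital_ext_msa:
  assumes stV: "star_vs scV stV" and stW: "star_vs scW stW"
    and lin: "Vector_Spaces.linear scV scW \<phi>" and com: "\<And>x. \<phi> (stV x) = stW (\<phi> x)"
    and Z: "Z \<in> msa (ust stV) n"
  shows "amp (unital_ext \<phi>) Z \<in> msa (ust stW) n"
proof -
  interpret lin: Vector_Spaces.linear scV scW \<phi> by fact
  have sq: "Z \<in> sq n" and sa: "\<And>i j. ust stV (Z j i) = Z i j"
    using Z by (auto simp: msa_def madj_def fun_eq_iff)
  have "amp (unital_ext \<phi>) Z \<in> sq n"
    using sq by (auto simp: rect_def amp_def unital_ext_def zero_prod_def)
  moreover have "madj (ust stW) (amp (unital_ext \<phi>) Z) = amp (unital_ext \<phi>) Z"
  proof (rule ext, rule ext)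
    fix i j
    have "fst (ust stV (Z j i)) = fst (Z i j)" "snd (ust stV (Z j i)) = snd (Z i j)" using sa by auto
    then show "madj (ust stW) (amp (unital_ext \<phi>) Z) i j = amp (unital_ext \<phi>) Z i j"
      by (auto simp: madj_def amp_def unital_ext_def ust_def com[symmetric])
  qed
  ultimately show ?thesis by (simp add: msa_def)
qed

lemma amp_unital_ext_fst:
  assumes lin: "Vector_Spaces.linear scV scW \<phi>"
  shows "(\<lambda>i j. - fst (amp (unital_ext \<phi>) Z i j)) = amp \<phi> (\<lambda>i j. - fst (Z i j))"
proof -
  interpret lin: Vector_Spaces.linear scV scW \<phi> by fact
  show ?thesis by (auto simp: amp_def unital_ext_def fun_eq_iff lin.neg)
qed

lemma amp_unital_ext_snd: "(\<lambda>i j. - snd (amp (unital_ext \<phi>) Z i j)) = (\<lambda>i j. - snd (Z i j))"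
  by (auto simp: amp_def unital_ext_def fun_eq_iff)

lemma inj_unital_ext: "inj \<phi> \<Longrightarrow> inj (unital_ext \<phi>)"
  by (auto simp: inj_def unital_ext_def prod_eq_iff)

lemma unital_ext_completely_positive:
  assumes stV: "star_vs scV stV" and stW: "star_vs scW stW"
    and contr: "gauge_contractive scV stV \<nu> scW stW \<omega> \<phi>"
  shows "completely_positive scV stV \<nu> scW stW \<omega> (unital_ext \<phi>)"
  unfolding completely_positive_def
proof (intro allI impI)
  have lin: "Vector_Spaces.linear scV scW \<phi>" and com: "\<And>x. \<phi> (stV x) = stW (\<phi> x)"
    and le: "\<And>n A. A \<in> msa stV n \<Longrightarrow> \<omega> n (amp \<phi> A) \<le> \<nu> n A"
    using contr by (auto simp: gauge_contractive_def)
  fix n Z assume u: "upos scV stV \<nu> n Z"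
  then have Z: "Z \<in> msa (ust stV) n"
    and u0: "unorm scV \<nu> n (\<lambda>i j. - fst (Z i j)) (\<lambda>i j. - snd (Z i j)) = 0"
    by (auto simp: upos_def)
  have sub: "ugauge_set scV \<nu> n (\<lambda>i j. - fst (Z i j)) (\<lambda>i j. - snd (Z i j))
    \<subseteq> ugauge_set scW \<omega> n (amp \<phi> (\<lambda>i j. - fst (Z i j))) (\<lambda>i j. - snd (Z i j))"
    by (rule ugauge_set_amp_subset[OF stV lin neg_fst_msa[OF stV Z]]) (use le in force)
  have "unorm scW \<omega> n (\<lambda>i j. - fst (amp (unital_ext \<phi>) Z i j))
      (\<lambda>i j. - snd (amp (unital_ext \<phi>) Z i j)) = 0"
    unfolding amp_unital_ext_fst[OF lin] amp_unital_ext_snd unorm_ugauge_set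
    by (rule Inf_eq_if_subset_lower_bound[OF _ sub ugauge_set_nonneg]) (use u0 in \<open>simp add: unorm_ugauge_set\<close>)
  then show "upos scW stW \<omega> n (amp (unital_ext \<phi>) Z)"
    using amp_unital_ext_msa[OF stV stW lin com Z] by (simp add: upos_def)
qed

lemma unital_ext_reflects_upos:
  assumes stV: "star_vs scV stV"
    and iso: "gauge_isometric scV stV \<nu> scW stW \<omega> \<phi>" and inj: "inj \<phi>"
    and Z: "Z \<in> sq n" and uW: "upos scW stW \<omega> n (amp (unital_ext \<phi>) Z)"
  shows "upos scV stV \<nu> n Z"
proof -
  have lin: "Vector_Spaces.linear scV scW \<phi>" and com: "\<And>x. \<phi> (stV x) = stW (\<phi> x)"
    and eq: "\<And>n A. A \<in> msa stV n \<Longrightarrow> \<omega> n (amp \<phi> A) = \<nu> n A"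
    using iso by (auto simp: gauge_isometric_def)
  have ZW: "amp (unital_ext \<phi>) Z \<in> msa (ust stW) n"
    and u0: "unorm scW \<omega> n (\<lambda>i j. - fst (amp (unital_ext \<phi>) Z i j))
               (\<lambda>i j. - snd (amp (unital_ext \<phi>) Z i j)) = 0"
    using uW by (auto simp: upos_def)
  have "madj (ust stV) Z = Z"
  proof (rule ext, rule ext)
    fix i j
    have "stW (\<phi> (fst (Z j i))) = \<phi> (fst (Z i j))" "cnj (snd (Z j i)) = snd (Z i j)"
      using ZW by (auto simp: msa_def madj_def amp_def fun_eq_iff ust_def unital_ext_def)
    then have "stV (fst (Z j i)) = fst (Z i j)" "cnj (snd (Z j i)) = snd (Z i j)"
      using inj by (auto simp: com[symmetric] inj_def)
    then show "madj (ust stV) Z i j = Z i j" by (simp add: madj_def ust_def prod_eq_iff)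
  qed
  then have ZV: "Z \<in> msa (ust stV) n" using Z by (simp add: msa_def)
  have sub: "ugauge_set scW \<omega> n (amp \<phi> (\<lambda>i j. - fst (Z i j))) (\<lambda>i j. - snd (Z i j))
    \<subseteq> ugauge_set scV \<nu> n (\<lambda>i j. - fst (Z i j)) (\<lambda>i j. - snd (Z i j))"
    by (rule ugauge_set_amp_supset[OF stV lin neg_fst_msa[OF stV ZV]]) (use eq in force)
  have "unorm scV \<nu> n (\<lambda>i j. - fst (Z i j)) (\<lambda>i j. - snd (Z i j)) = 0"
    unfolding unorm_ugauge_set
    by (rule Inf_eq_if_subset_lower_bound[OF _ sub ugauge_set_nonneg])
       (use u0 in \<open>simp add: unorm_ugauge_set amp_unital_ext_fst[OF lin] amp_unital_ext_snd\<close>)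
  then show ?thesis using ZV by (simp add: upos_def)
qed

theorem theorem3p13:
  fixes scV :: "complex \<Rightarrow> 'v::ab_group_add \<Rightarrow> 'v" and stV :: "'v \<Rightarrow> 'v"
    and \<nu> :: "nat \<Rightarrow> (nat \<Rightarrow> nat \<Rightarrow> 'v) \<Rightarrow> real"
    and scW :: "complex \<Rightarrow> 'w::ab_group_add \<Rightarrow> 'w" and stW :: "'w \<Rightarrow> 'w"
    and \<omega> :: "nat \<Rightarrow> (nat \<Rightarrow> nat \<Rightarrow> 'w) \<Rightarrow> real"
    and \<phi> :: "'v \<Rightarrow> 'w"
  assumes "LinfMOS scV stV \<nu>" and "LinfMOS scW stW \<omega>"
    and "gauge_contractive scV stV \<nu> scW stW \<omega> \<phi>"
  shows "completely_positive scV stV \<nu> scW stW \<omega> (unital_ext \<phi>) \<and>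
         (gauge_isometric scV stV \<nu> scW stW \<omega> \<phi> \<longrightarrow>
         complete_order_embedding scV stV \<nu> scW stW \<omega> (unital_ext \<phi>))"
proof -
  have stV: "star_vs scV stV" and stW: "star_vs scW stW"
    using assms(1,2) by (simp_all add: LinfMOS_def)
  have CP: "completely_positive scV stV \<nu> scW stW \<omega> (unital_ext \<phi>)"
    by (rule unital_ext_completely_positive[OF stV stW assms(3)])
  moreover have "complete_order_embedding scV stV \<nu> scW stW \<omega> (unital_ext \<phi>)"
    if iso: "gauge_isometric scV stV \<nu> scW stW \<omega> \<phi>"
  proof -
    have inj: "inj \<phi>" by (rule gauge_isometric_inj[OF assms(1,2) iso])
    show ?thesis
      unfolding complete_order_embedding_def
      using inj_unital_ext[OF inj] unital_ext_reflects_upos[OF stV iso inj] CP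
      by (auto simp: completely_positive_def)
  qed
  ultimately show ?thesis by blast
qed

end
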